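(* Let $p$ be even, let $\mathcal{C}_0$ be a fixed two-sided $p$-periodic CMV matrix, and let $1\le q\le\infty$. There is a constant $C$ such that for any sequence of Verblunsky coefficients $\alpha=\{\alpha_n\}$, $$e^{-p}\bigl\|\tilde d_m(\alpha,\mathcal{T}_{\mathcal{C}_0})\bigr\|_{\ell^q}\le\bigl\|d_m(\alpha,\mathcal{T}_{\mathcal{C}_0})\bigr\|_{\ell^q}\le C\bigl\|\tilde d_m(\alpha,\mathcal{T}_{\mathcal{C}_0})\bigr\|_{\ell^q}.$$
   Context: Verblunsky coefficients are complex numbers $\alpha_n\in\mathbb{D}$. For $\alpha\in\mathbb{D}$, $\rho=(1-|\alpha|^2)^{1/2}$. A two-sided $p$-periodic CMV matrix $\mathcal{C}_0$ is determined by a $p$-periodic sequence $\{\alpha^{(0)}_n\}_{n\in\mathbb{Z}}\subset\mathbb{D}$; its discriminant is $\Delta_{\mathcal{C}_0}(z)=\mathrm{Tr}(z^{-p/2}M_{p-1}(z)\cdots M_0(z))$ with $M_n(z)=(\rho^{(0)}_n)^{-1}\begin{pmatrix}z&-\bar\alpha^{(0)}_n\\-\alpha^{(0)}_nz&1\end{pmatrix}$, and the isospectral torus $\mathcal{T}_{\mathcal{C}_0}$ is the set of $p$-periodic sequences in $\mathbb{D}$ with the same discriminant. $d_m(\alpha,\alpha')=\sum_{k=0}^\infty e^{-k}|\alpha_{m+k}-\alpha'_{m+k}|$ and $\tilde d_m(\alpha,\alpha')=\sum_{k=0}^{p}|\alpha_{m+k}-\alpha'_{m+k}|$; distances to $\mathcal{T}_{\mathcal{C}_0}$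 are infima over $\alpha'\in\mathcal{T}_{\mathcal{C}_0}$. The $\ell^q$ norms are over $m$. *)

theory Defs
  imports "HOL-Analysis.Analysis"
begin

text \<open>2x2 complex matrices as quadruples (a,b,c,d) = [[a,b],[c,d]].\<close>
type_synonym cmat2 = "complex \<times> complex \<times> complex \<times> complex"

definition mat2_mult :: "cmat2 \<Rightarrow> cmat2 \<Rightarrow> cmat2" where
  "mat2_mult A B = (case A of (a,b,c,d) \<Rightarrow> case B of (e,f,g,h) \<Rightarrow>
     (a*e + b*g, a*f + b*h, c*e + d*g, c*f + d*h))"

definition mat2_trace :: "cmat2 \<Rightarrow> complex" where
  "mat2_trace A = (case A of (a,b,c,d) \<Rightarrow> a + d)"

definition mat2_scale :: "complex \<Rightarrow> cmat2 \<Rightarrow> cmat2" where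
  "mat2_scale s A = (case A of (a,b,c,d) \<Rightarrow> (s*a, s*b, s*c, s*d))"

definition rho :: "complex \<Rightarrow> real" where
  "rho a = sqrt (1 - (cmod a)^2)"

definition szego_mat :: "(int \<Rightarrow> complex) \<Rightarrow> nat \<Rightarrow> complex \<Rightarrow> cmat2" where
  "szego_mat al n z = mat2_scale (complex_of_real (1 / rho (al (int n))))
      (z, - cnj (al (int n)), - al (int n) * z, 1)"

fun transfer :: "(int \<Rightarrow> complex) \<Rightarrow> nat \<Rightarrow> complex \<Rightarrow> cmat2" where
  "transfer al 0 z = (1, 0, 0, 1)"
| "transfer al (Suc n) z = mat2_mult (szego_mat al n z) (transfer al n z)"

definition discriminant :: "nat \<Rightarrow> (int \<Rightarrow> complex) \<Rightarrow> complex \<Rightarrow> complex" where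
  "discriminant p al z = mat2_trace (mat2_scale (z powi (- int (p div 2))) (transfer al p z))"

definition periodic_verblunsky :: "nat \<Rightarrow> (int \<Rightarrow> complex) \<Rightarrow> bool" where
  "periodic_verblunsky p al \<longleftrightarrow> (\<forall>n. al (n + int p) = al n) \<and> (\<forall>n. cmod (al n) < 1)"

definition iso_torus :: "nat \<Rightarrow> (int \<Rightarrow> complex) \<Rightarrow> (int \<Rightarrow> complex) set" where
  "iso_torus p al0 = {al. periodic_verblunsky p al \<and>
      (\<forall>z. z \<noteq> 0 \<longrightarrow> discriminant p al z = discriminant p al0 z)}"

definition dm :: "nat \<Rightarrow> (nat \<Rightarrow> complex) \<Rightarrow> (int \<Rightarrow> complex) \<Rightarrow> real" where
  "dm m a a' = (\<Sum>k. exp (- real k) * cmod (a (m + k) - a' (int (m + k))))"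

definition dm_tilde :: "nat \<Rightarrow> nat \<Rightarrow> (nat \<Rightarrow> complex) \<Rightarrow> (int \<Rightarrow> complex) \<Rightarrow> real" where
  "dm_tilde p m a a' = (\<Sum>k\<le>p. cmod (a (m + k) - a' (int (m + k))))"

definition dist_torus :: "nat \<Rightarrow> (int \<Rightarrow> complex) \<Rightarrow> nat \<Rightarrow> (nat \<Rightarrow> complex) \<Rightarrow> real" where
  "dist_torus p al0 m a = (INF a'\<in>iso_torus p al0. dm m a a')"

definition dist_torus_tilde :: "nat \<Rightarrow> (int \<Rightarrow> complex) \<Rightarrow> nat \<Rightarrow> (nat \<Rightarrow> complex) \<Rightarrow> real" where
  "dist_torus_tilde p al0 m a = (INF a'\<in>iso_torus p al0. dm_tilde p m a a')"

definition lq_norm :: "ereal \<Rightarrow> (nat \<Rightarrow> real) \<Rightarrow> ennreal" where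
  "lq_norm q f = (if q = \<infinity> then (SUP m. ennreal \<bar>f m\<bar>)
     else (let r = real_of_ereal q in
       if summable (\<lambda>m. \<bar>f m\<bar> powr r)
       then ennreal ((\<Sum>m. \<bar>f m\<bar> powr r) powr (1 / r)) else top))"

end

theory Submission
  imports Defs
begin

(* The lower bound holds termwise: on the window k <= p the weight e^{-k} is at least e^{-p}.
   For the upper bound choose, for every n, a point b_n of the torus that nearly realises
   d~_n(alpha). Consecutive approximants b_n and b_{n+1} are both close to alpha on the p sites
   n+1, ..., n+p; being p-periodic they are then close everywhere, and telescoping gives
   |alpha_{m+k} - b_m(m+k)| <= 2 (d~_m + ... + d~_{m+k}) up to epsilon. Splitting
   e^{-k} = c^k c^k with c = e^{-1/2} bounds d_m by 2/(1-c) times the geometric tail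
   sum_i c^i d~_{m+i}, and this convolution with a summable kernel is bounded on l^q
   (by Jensen's inequality when q is finite). Only the periodicity of the points of the torus
   enters. *)

section \<open>Jensen's inequality for powers\<close>

lemma powr_convex_nonneg:
  fixes r :: real
  assumes "r \<ge> 1"
  shows "convex_on {0..} (\<lambda>x. x powr r)"
proof (rule convex_onI)
  fix t x y :: real
  assume t: "0 < t" "t < 1" and xy: "x \<in> {0..}" "y \<in> {0..}"
  have shrink: "s powr r * z \<le> s * z" if "0 \<le> s" "s \<le> 1" "0 \<le> z" for s z :: real
    using powr_mono'[of 1 r s] that assms by (intro mult_right_mono) auto
  show "((1 - t) *\<^sub>R x + t *\<^sub>R y) powr r \<le> (1 - t) * x powr r + t * y powr r"
  proof (cases "x = 0 \<or> y = 0")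
    case True
    then show ?thesis
      using shrink[of t "y powr r"] shrink[of "1 - t" "x powr r"] t xy assms
      by (auto simp: powr_mult)
  next
    case False
    then show ?thesis
      using convex_onD[OF powr_convex[OF assms], of t x y] t xy by auto
  qed
qed simp

lemma weighted_sum_powr_le:
  fixes w x :: "'i \<Rightarrow> real" and r :: real
  assumes "finite A" and r: "r \<ge> 1"
    and w: "\<And>i. i \<in> A \<Longrightarrow> 0 \<le> w i" and x: "\<And>i. i \<in> A \<Longrightarrow> 0 \<le> x i"
  shows "(\<Sum>i\<in>A. w i * x i) powr r \<le> (\<Sum>i\<in>A. w i) powr (r - 1) * (\<Sum>i\<in>A. w i * x i powr r)"
proof (cases "(\<Sum>i\<in>A. w i) = 0")
  case True
  then have "\<forall>i\<in>A. w i = 0"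
    using w sum_nonneg_eq_0_iff[OF \<open>finite A\<close>] by blast
  then show ?thesis using r by simp
next
  case False
  define W where "W = (\<Sum>i\<in>A. w i)"
  have W: "W > 0"
    using False w unfolding W_def by (simp add: order_less_le sum_nonneg)
  have "(\<Sum>i\<in>A. (w i / W) *\<^sub>R x i) powr r \<le> (\<Sum>i\<in>A. (w i / W) * x i powr r)"
    using False w x W \<open>finite A\<close>
    by (intro convex_on_sum[OF _ _ powr_convex_nonneg[OF r]])
       (auto simp: W_def sum_divide_distrib[symmetric])
  then have "(\<Sum>i\<in>A. w i * x i) powr r / W powr r \<le> (\<Sum>i\<in>A. w i * x i powr r) / W"
    using W w x by (simp add: sum_divide_distrib[symmetric] powr_divide sum_nonneg)
  then have "(\<Sum>i\<in>A. w i * x i) powr r \<le> W powr r / W * (\<Sum>i\<in>A. w i * x i powr r)"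
    using W by (simp add: divide_le_eq field_simps)
  then show ?thesis
    using W by (simp add: W_def powr_diff)
qed

lemma weighted_suminf_powr_le:
  fixes w x :: "nat \<Rightarrow> real" and r :: real
  assumes r: "r \<ge> 1" and w: "\<And>i. 0 \<le> w i" and x: "\<And>i. 0 \<le> x i"
    and "summable w" "summable (\<lambda>i. w i * x i)" "summable (\<lambda>i. w i * x i powr r)"
  shows "(\<Sum>i. w i * x i) powr r \<le> (\<Sum>i. w i) powr (r - 1) * (\<Sum>i. w i * x i powr r)"
proof (rule LIMSEQ_le_const2)
  show "(\<lambda>N. (\<Sum>i<N. w i * x i) powr r) \<longlonglongrightarrow> (\<Sum>i. w i * x i) powr r"
    using assms by (intro tendsto_powr' summable_LIMSEQ) (auto intro!: sum_nonneg always_eventually)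
  have "(\<Sum>i<N. w i * x i) powr r \<le> (\<Sum>i. w i) powr (r - 1) * (\<Sum>i. w i * x i powr r)" for N
  proof -
    have "(\<Sum>i<N. w i * x i) powr r \<le> (\<Sum>i<N. w i) powr (r - 1) * (\<Sum>i<N. w i * x i powr r)"
      using assms by (intro weighted_sum_powr_le) auto
    also have "\<dots> \<le> (\<Sum>i. w i) powr (r - 1) * (\<Sum>i. w i * x i powr r)"
      using assms by (intro mult_mono powr_mono2 sum_le_suminf) (auto intro!: sum_nonneg suminf_nonneg)
    finally show ?thesis .
  qed
  then show "\<exists>N. \<forall>n\<ge>N. (\<Sum>i<n. w i * x i) powr r \<le> (\<Sum>i. w i) powr (r - 1) * (\<Sum>i. w i * x i powr r)"
    by blast
qed

lemma sum_shifted_suminf_le: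
  fixes w x :: "nat \<Rightarrow> real"
  assumes w: "\<And>i. 0 \<le> w i" "summable w" and x: "\<And>n. 0 \<le> x n" "summable x"
  shows "(\<Sum>m<M. \<Sum>i. w i * x (m + i)) \<le> (\<Sum>i. w i) * (\<Sum>n. x n)"
proof -
  have shifted_le: "(\<Sum>m<M. x (m + i)) \<le> (\<Sum>n. x n)" for i
  proof -
    have "(\<Sum>m<M. x (m + i)) = (\<Sum>n\<in>(\<lambda>m. m + i) ` {..<M}. x n)"
      by (simp add: sum.reindex)
    also have "\<dots> \<le> (\<Sum>n<M + i. x n)"
      using x by (intro sum_mono2) auto
    also have "\<dots> \<le> (\<Sum>n. x n)"
      using x by (intro sum_le_suminf) auto
    finally show ?thesis .
  qed
  have x_le: "x n \<le> (\<Sum>n. x n)" for n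
    using sum_le_suminf[OF x(2), of "{n}"] x by simp
  have summable_terms: "summable (\<lambda>i. w i * x (m + i))" for m
    using w x x_le
    by (intro summable_comparison_test'[OF summable_mult2[OF w(2), of "\<Sum>n. x n"]])
       (auto intro: mult_left_mono)
  have "(\<Sum>m<M. \<Sum>i. w i * x (m + i)) = (\<Sum>i. \<Sum>m<M. w i * x (m + i))"
    using summable_terms by (intro suminf_sum[symmetric]) auto
  also have "\<dots> \<le> (\<Sum>i. w i * (\<Sum>n. x n))"
    using w shifted_le summable_terms
    by (intro suminf_le summable_sum summable_mult2)
       (auto simp: sum_distrib_left[symmetric] intro: mult_left_mono)
  also have "\<dots> = (\<Sum>i. w i) * (\<Sum>n. x n)"
    using w(2) by (rule suminf_mult2[symmetric])
  finally show ?thesis .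
qed

section \<open>Geometric tails in l^q\<close>

lemma lq_norm_le_scaled:
  fixes f g :: "nat \<Rightarrow> real" and l :: real
  assumes q: "1 \<le> q" and l: "0 < l" and fg: "\<And>m. \<bar>f m\<bar> \<le> l * \<bar>g m\<bar>"
  shows "lq_norm q f \<le> ennreal l * lq_norm q g"
proof (cases q)
  case PInf
  have "ennreal \<bar>f m\<bar> \<le> ennreal l * (SUP m. ennreal \<bar>g m\<bar>)" for m
  proof -
    have "ennreal \<bar>f m\<bar> \<le> ennreal l * ennreal \<bar>g m\<bar>"
      using fg l by (simp add: ennreal_mult[symmetric] ennreal_leI)
    also have "\<dots> \<le> ennreal l * (SUP m. ennreal \<bar>g m\<bar>)"
      by (intro mult_left_mono SUP_upper) auto
    finally show ?thesis .
  qed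
  then show ?thesis
    using PInf by (simp add: lq_norm_def SUP_least)
next
  case (real r)
  with q have r: "1 \<le> r" by simp
  show ?thesis
  proof (cases "summable (\<lambda>m. \<bar>g m\<bar> powr r)")
    case False
    then show ?thesis
      using real l by (simp add: lq_norm_def ennreal_mult_top)
  next
    case True
    have f_le: "\<bar>f m\<bar> powr r \<le> l powr r * \<bar>g m\<bar> powr r" for m
      using fg[of m] r l by (simp add: powr_mult[symmetric] powr_mono2)
    have summable_f: "summable (\<lambda>m. \<bar>f m\<bar> powr r)"
      using f_le by (intro summable_comparison_test'[OF summable_mult[OF True]]) auto
    have "(\<Sum>m. \<bar>f m\<bar> powr r) \<le> l powr r * (\<Sum>m. \<bar>g m\<bar> powr r)"
      using suminf_le[OF f_le summable_f summable_mult[OF True]] suminf_mult[OF True] by simp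
    then have "(\<Sum>m. \<bar>f m\<bar> powr r) powr (1 / r) \<le> (l powr r * (\<Sum>m. \<bar>g m\<bar> powr r)) powr (1 / r)"
      using r summable_f by (intro powr_mono2) (auto intro: suminf_nonneg)
    also have "\<dots> = l * (\<Sum>m. \<bar>g m\<bar> powr r) powr (1 / r)"
      using l r True by (simp add: powr_mult powr_powr suminf_nonneg)
    finally show ?thesis
      using real True summable_f l by (simp add: lq_norm_def ennreal_mult[symmetric] ennreal_leI)
  qed
qed (use q in simp)

definition geom_tail :: "real \<Rightarrow> (nat \<Rightarrow> real) \<Rightarrow> nat \<Rightarrow> real" where
  "geom_tail c t m = (\<Sum>i. c ^ i * t (m + i))"

context
  fixes c B :: real and t :: "nat \<Rightarrow> real"
  assumes c: "0 \<le> c" "c < 1" and t_nonneg: "\<And>n. 0 \<le> t n" and t_bounded: "\<And>n. t n \<le> B"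
begin

lemma summable_geom_tail: "summable (\<lambda>i. c ^ i * t (m + i))"
proof -
  have "summable (\<lambda>i. c ^ i * B)"
    using c by (simp add: summable_geometric summable_mult2)
  then show ?thesis
    by (rule summable_comparison_test') (use c t_nonneg t_bounded in \<open>auto intro: mult_left_mono\<close>)
qed

lemma geom_tail_nonneg: "0 \<le> geom_tail c t m"
  unfolding geom_tail_def using c t_nonneg by (intro suminf_nonneg summable_geom_tail) auto

lemma geom_tail_le:
  assumes "\<And>n. t n \<le> M"
  shows "geom_tail c t m \<le> M / (1 - c)"
proof -
  have geometric: "summable (\<lambda>i. c ^ i)"
    using c by (simp add: summable_geometric)
  have "geom_tail c t m \<le> (\<Sum>i. c ^ i * M)"
    unfolding geom_tail_def using c assms
    by (intro suminf_le summable_geom_tail summable_mult2 geometric mult_left_mono) auto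
  also have "\<dots> = M / (1 - c)"
    using c suminf_mult2[OF geometric, of M] by (simp add: suminf_geometric)
  finally show ?thesis .
qed

lemma geom_tail_add_const: "geom_tail c (\<lambda>n. t n + e) m = geom_tail c t m + e / (1 - c)"
proof -
  have "geom_tail c (\<lambda>n. t n + e) m = geom_tail c t m + e * (\<Sum>i. c ^ i)"
    unfolding geom_tail_def using summable_geom_tail c
    by (simp add: distrib_left suminf_add[symmetric] suminf_mult summable_mult summable_geometric mult.commute)
  also have "\<dots> = geom_tail c t m + e / (1 - c)"
    using c by (simp add: suminf_geometric)
  finally show ?thesis .
qed

lemma suminf_geom_tail_powr_le:
  assumes r: "1 \<le> r" and summable_t: "summable (\<lambda>n. t n powr r)"
  shows "summable (\<lambda>m. geom_tail c t m powr r)"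
    and "(\<Sum>m. geom_tail c t m powr r) \<le> (1 / (1 - c)) powr r * (\<Sum>n. t n powr r)"
proof -
  define S where "S = 1 / (1 - c)"
  have S: "0 < S"
    using c by (simp add: S_def)
  have geometric: "summable (\<lambda>i. c ^ i)"
    using c by (simp add: summable_geometric)
  have jensen: "geom_tail c t m powr r \<le> S powr (r - 1) * (\<Sum>i. c ^ i * t (m + i) powr r)" for m
  proof -
    have "summable (\<lambda>i. c ^ i * t (m + i) powr r)"
      using c t_nonneg t_bounded r
      by (intro summable_comparison_test'[OF summable_mult2[OF geometric, of "B powr r"]])
         (auto intro!: mult_left_mono powr_mono2)
    then show ?thesis
      using weighted_suminf_powr_le[OF r, of "\<lambda>i. c ^ i" "\<lambda>i. t (m + i)"]
        c t_nonneg summable_geom_tail geometric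
      by (simp add: geom_tail_def suminf_geometric S_def)
  qed
  have partial: "(\<Sum>m<M. geom_tail c t m powr r) \<le> S powr r * (\<Sum>n. t n powr r)" for M
  proof -
    have "(\<Sum>m<M. geom_tail c t m powr r) \<le> S powr (r - 1) * (\<Sum>m<M. \<Sum>i. c ^ i * t (m + i) powr r)"
      unfolding sum_distrib_left by (intro sum_mono jensen)
    also have "\<dots> \<le> S powr (r - 1) * (S * (\<Sum>n. t n powr r))"
      using sum_shifted_suminf_le[of "\<lambda>i. c ^ i" "\<lambda>n. t n powr r" M]
        c geometric summable_t
      by (intro mult_left_mono) (auto simp: suminf_geometric S_def)
    also have "\<dots> = S powr r * (\<Sum>n. t n powr r)"
      using S by (simp add: powr_diff)
    finally show ?thesis .
  qed
  show summable_tail: "summable (\<lambda>m. geom_tail c t m powr r)"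
    using partial by (intro summableI_nonneg_bounded) auto
  show "(\<Sum>m. geom_tail c t m powr r) \<le> (1 / (1 - c)) powr r * (\<Sum>n. t n powr r)"
    using suminf_le_const[OF summable_tail partial] by (simp add: S_def)
qed

lemma lq_norm_geom_tail_le:
  assumes q: "1 \<le> q"
  shows "lq_norm q (geom_tail c t) \<le> ennreal (1 / (1 - c)) * lq_norm q t"
proof (cases q)
  case PInf
  define U where "U = (SUP n. ennreal \<bar>t n\<bar>)"
  show ?thesis
  proof (cases U)
    case (real M)
    have "t n \<le> M" for n
      using SUP_upper[of n UNIV "\<lambda>n. ennreal \<bar>t n\<bar>"] real t_nonneg[of n]
      by (simp add: U_def ennreal_le_iff)
    then have "geom_tail c t m \<le> M / (1 - c)" for m
      by (rule geom_tail_le)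
    then have "ennreal \<bar>geom_tail c t m\<bar> \<le> ennreal (1 / (1 - c)) * U" for m
      using real c geom_tail_nonneg[of m] by (simp add: ennreal_mult[symmetric] ennreal_leI)
    then show ?thesis
      using PInf by (simp add: lq_norm_def U_def SUP_least)
  next
    case top
    then have "ennreal (1 / (1 - c)) * U = top"
      using c by (simp add: ennreal_mult_top)
    then show ?thesis
      using PInf by (simp add: lq_norm_def U_def)
  qed
next
  case (real r)
  with q have r: "1 \<le> r" by simp
  show ?thesis
  proof (cases "summable (\<lambda>n. \<bar>t n\<bar> powr r)")
    case False
    then show ?thesis
      using real c by (simp add: lq_norm_def ennreal_mult_top)
  next
    case True
    then have summable_t: "summable (\<lambda>n. t n powr r)"
      using t_nonneg by simp
    have "(\<Sum>m. geom_tail c t m powr r) powr (1 / r) \<le> ((1 / (1 - c)) powr r * (\<Sum>n. t n powr r)) powr (1 / r)"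
      using suminf_geom_tail_powr_le[OF r summable_t] r geom_tail_nonneg
      by (intro powr_mono2) (auto intro: suminf_nonneg)
    also have "\<dots> = 1 / (1 - c) * (\<Sum>n. t n powr r) powr (1 / r)"
      using c r t_nonneg summable_t by (simp add: powr_mult powr_powr suminf_nonneg)
    finally show ?thesis
      using real summable_t suminf_geom_tail_powr_le(1)[OF r summable_t] t_nonneg geom_tail_nonneg c
      by (simp add: lq_norm_def ennreal_mult[symmetric] ennreal_leI)
  qed
qed (use q in simp)

end

section \<open>Periodic approximants\<close>

lemma periodic_add_mult:
  assumes "\<And>n. f (n + int p) = f n"
  shows "f (x + int p * k) = f x"
proof (induction k rule: int_induct[of _ 0])
  case (step1 k)
  then show ?case
    using assms[of "x + int p * k"] by (simp add: algebra_simps)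
next
  case (step2 k)
  then show ?case
    using assms[of "x + int p * (k - 1)"] by (simp add: algebra_simps)
qed simp

lemma periodic_norm_diff_le_window:
  fixes f g :: "int \<Rightarrow> 'a::real_normed_vector"
  assumes p: "0 < p" and f: "\<And>n. f (n + int p) = f n" and g: "\<And>n. g (n + int p) = g n"
    and window: "\<And>j. j < p \<Longrightarrow> norm (f (n0 + int j) - g (n0 + int j)) \<le> e"
  shows "norm (f x - g x) \<le> e"
proof -
  define j where "j = nat ((x - n0) mod int p)"
  have "j < p" and x: "x = (n0 + int j) + int p * ((x - n0) div int p)"
    using p by (auto simp: j_def nat_less_iff)
  then show ?thesis
    using window[of j] periodic_add_mult[of f, OF f] periodic_add_mult[of g, OF g] by metis
qed

lemma window_approximants_drift_le:
  fixes a :: "nat \<Rightarrow> 'a::real_normed_vector" and b :: "nat \<Rightarrow> int \<Rightarrow> 'a"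
  assumes p: "0 < p" and periodic: "\<And>n x. b n (x + int p) = b n x"
    and close: "\<And>n j. j \<le> p \<Longrightarrow> norm (a (n + j) - b n (int (n + j))) \<le> u n"
  shows "norm (a (m + k) - b m (int (m + k))) \<le> 2 * (\<Sum>i\<le>k. u (m + i))"
proof -
  have u_nonneg: "0 \<le> u n" for n
    using close[of 0 n] norm_ge_zero order_trans by blast
  have step: "norm (b n x - b (Suc n) x) \<le> u n + u (Suc n)" for n x
  proof (rule periodic_norm_diff_le_window[of p "b n" "b (Suc n)" "int (Suc n)", OF p periodic periodic])
    fix j assume "j < p"
    then have "norm (a (n + Suc j) - b n (int (n + Suc j))) \<le> u n"
      and "norm (a (Suc n + j) - b (Suc n) (int (Suc n + j))) \<le> u (Suc n)"
      using close[of "Suc j" n] close[of j "Suc n"] by auto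
    then show "norm (b n (int (Suc n) + int j) - b (Suc n) (int (Suc n) + int j)) \<le> u n + u (Suc n)"
      using norm_triangle_ineq4[of "a (Suc n + j) - b (Suc n) (int (Suc n + j))"
          "a (n + Suc j) - b n (int (n + Suc j))"]
      by (simp add: norm_minus_commute add.assoc)
  qed
  have telescope: "norm (b m x - b (m + k) x) + u (m + k) \<le> 2 * (\<Sum>i\<le>k. u (m + i))" for x
  proof (induction k)
    case 0
    then show ?case using u_nonneg[of m] by simp
  next
    case (Suc k)
    then show ?case
      using norm_triangle_ineq[of "b m x - b (m + k) x" "b (m + k) x - b (Suc (m + k)) x"]
        step[of "m + k" x]
      by simp
  qed
  show ?thesis
    using norm_triangle_ineq4[of "a (m + k) - b (m + k) (int (m + k))" "b m (int (m + k)) - b (m + k) (int (m + k))"]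
      close[of 0 "m + k"] telescope[of "int (m + k)"]
    by simp
qed

lemma geometric_weighted_partial_sums_le:
  fixes x u :: "nat \<Rightarrow> real"
  assumes c: "0 \<le> c" "c < 1"
    and u: "\<And>i. 0 \<le> u i" "summable (\<lambda>i. c ^ i * u i)"
    and x: "summable (\<lambda>k. c ^ (2 * k) * x k)" "\<And>k. x k \<le> (\<Sum>i\<le>k. u i)"
  shows "(\<Sum>k. c ^ (2 * k) * x k) \<le> (\<Sum>i. c ^ i * u i) / (1 - c)"
proof -
  define H where "H = (\<Sum>i. c ^ i * u i)"
  have term_le: "c ^ (2 * k) * x k \<le> H * c ^ k" for k
  proof -
    have "c ^ (2 * k) * x k \<le> c ^ k * c ^ k * (\<Sum>i\<le>k. u i)"
      using c x(2)[of k] by (simp add: mult_2 power_add mult_left_mono)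
    also have "\<dots> = c ^ k * (\<Sum>i\<le>k. c ^ k * u i)"
      by (simp add: sum_distrib_left mult.assoc)
    also have "\<dots> \<le> c ^ k * (\<Sum>i\<le>k. c ^ i * u i)"
      using c u by (intro mult_left_mono sum_mono mult_right_mono power_decreasing) auto
    also have "\<dots> \<le> c ^ k * H"
      unfolding H_def lessThan_Suc_atMost[symmetric]
      using c u by (intro mult_left_mono sum_le_suminf) auto
    finally show ?thesis by (simp add: mult.commute)
  qed
  have "(\<Sum>k. c ^ (2 * k) * x k) \<le> (\<Sum>k. H * c ^ k)"
    using c by (intro suminf_le term_le x(1) summable_mult summable_geometric) auto
  also have "\<dots> = H / (1 - c)"
    using c by (simp add: suminf_mult summable_geometric suminf_geometric)
  finally show ?thesis unfolding H_def .
qed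

section \<open>Distances to the isospectral torus\<close>

lemma iso_torus_periodic: "b \<in> iso_torus p al0 \<Longrightarrow> b (n + int p) = b n"
  by (simp add: iso_torus_def periodic_verblunsky_def)

lemma iso_torus_norm_less_1: "b \<in> iso_torus p al0 \<Longrightarrow> cmod (b n) < 1"
  by (simp add: iso_torus_def periodic_verblunsky_def)

lemma iso_torus_self: "periodic_verblunsky p al0 \<Longrightarrow> al0 \<in> iso_torus p al0"
  by (simp add: iso_torus_def)

lemma dm_tilde_nonneg: "0 \<le> dm_tilde p m a b"
  unfolding dm_tilde_def by (intro sum_nonneg) auto

lemma exp_dm_tilde_le_dm:
  assumes "summable (\<lambda>k. exp (- real k) * cmod (a (m + k) - b (int (m + k))))"
  shows "exp (- real p) * dm_tilde p m a b \<le> dm m a b"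
proof -
  have "exp (- real p) * dm_tilde p m a b = (\<Sum>k<Suc p. exp (- real p) * cmod (a (m + k) - b (int (m + k))))"
    by (simp add: dm_tilde_def sum_distrib_left lessThan_Suc_atMost)
  also have "\<dots> \<le> (\<Sum>k<Suc p. exp (- real k) * cmod (a (m + k) - b (int (m + k))))"
    by (intro sum_mono mult_right_mono) auto
  also have "\<dots> \<le> dm m a b"
    unfolding dm_def using assms by (intro sum_le_suminf) auto
  finally show ?thesis .
qed

context
  fixes p :: nat and al0 :: "int \<Rightarrow> complex" and a :: "nat \<Rightarrow> complex"
  assumes al0: "periodic_verblunsky p al0" and a: "\<And>n. cmod (a n) < 1"
begin

lemma norm_diff_iso_torus_le: "b \<in> iso_torus p al0 \<Longrightarrow> cmod (a n - b x) \<le> 2"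
  using norm_triangle_ineq4[of "a n" "b x"] a[of n] iso_torus_norm_less_1[of b p al0 x] by simp

lemma summable_dm:
  assumes "b \<in> iso_torus p al0"
  shows "summable (\<lambda>k. exp (- real k) * cmod (a (m + k) - b (int (m + k))))"
proof -
  have "exp (- real k) = exp (-1) ^ k" for k
    by (simp add: exp_of_nat_mult[symmetric])
  then show ?thesis
    using norm_diff_iso_torus_le[OF assms]
    by (intro summable_comparison_test'[OF summable_mult2[OF summable_geometric, of "exp (-1)" 2]])
       (auto intro: mult_left_mono)
qed

lemma dm_nonneg: "b \<in> iso_torus p al0 \<Longrightarrow> 0 \<le> dm m a b"
  unfolding dm_def by (intro suminf_nonneg summable_dm) auto

lemma dist_torus_nonneg: "0 \<le> dist_torus p al0 m a"
  unfolding dist_torus_def using iso_torus_self[OF al0] dm_nonneg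
  by (intro cINF_greatest) auto

lemma dist_torus_tilde_nonneg: "0 \<le> dist_torus_tilde p al0 m a"
  unfolding dist_torus_tilde_def using iso_torus_self[OF al0] dm_tilde_nonneg
  by (intro cINF_greatest) auto

lemma bdd_below_dm: "bdd_below ((\<lambda>b. dm m a b) ` iso_torus p al0)"
  using dm_nonneg by (auto intro!: bdd_belowI)

lemma bdd_below_dm_tilde: "bdd_below ((\<lambda>b. dm_tilde p m a b) ` iso_torus p al0)"
  using dm_tilde_nonneg by (auto intro!: bdd_belowI)

lemma dist_torus_tilde_le: "dist_torus_tilde p al0 m a \<le> 2 * (real p + 1)"
proof -
  have "dist_torus_tilde p al0 m a \<le> dm_tilde p m a al0"
    unfolding dist_torus_tilde_def by (intro cINF_lower bdd_below_dm_tilde iso_torus_self al0)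
  also have "\<dots> \<le> (\<Sum>k\<le>p. 2)"
    unfolding dm_tilde_def using iso_torus_self[OF al0] by (intro sum_mono norm_diff_iso_torus_le)
  finally show ?thesis by simp
qed

lemma exp_dist_torus_tilde_le_dist_torus:
  "exp (- real p) * dist_torus_tilde p al0 m a \<le> dist_torus p al0 m a"
  unfolding dist_torus_def
proof (intro cINF_greatest)
  show "iso_torus p al0 \<noteq> {}"
    using iso_torus_self[OF al0] by blast
  fix b assume b: "b \<in> iso_torus p al0"
  have "dist_torus_tilde p al0 m a \<le> dm_tilde p m a b"
    unfolding dist_torus_tilde_def by (intro cINF_lower bdd_below_dm_tilde b)
  then have "exp (- real p) * dist_torus_tilde p al0 m a \<le> exp (- real p) * dm_tilde p m a b"
    by simp
  also have "\<dots> \<le> dm m a b"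
    by (intro exp_dm_tilde_le_dm summable_dm b)
  finally show "exp (- real p) * dist_torus_tilde p al0 m a \<le> dm m a b" .
qed

lemma dist_torus_tilde_near_minimiser:
  assumes "0 < eps"
  shows "\<exists>b\<in>iso_torus p al0. dm_tilde p n a b < dist_torus_tilde p al0 n a + eps"
proof -
  have "(INF b\<in>iso_torus p al0. dm_tilde p n a b) < dist_torus_tilde p al0 n a + eps"
    using assms by (simp add: dist_torus_tilde_def)
  then show ?thesis
    using iso_torus_self[OF al0] bdd_below_dm_tilde by (subst (asm) cINF_less_iff) auto
qed

lemma dm_approximant_le_geom_tail:
  assumes p: "0 < p" and b: "\<And>n. b n \<in> iso_torus p al0"
    and u: "\<And>n. 0 \<le> u n" "\<And>n. u n \<le> B" and close: "\<And>n. dm_tilde p n a (b n) \<le> u n"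
  shows "dm m a (b m) \<le> 2 / (1 - exp (-1/2)) * geom_tail (exp (-1/2)) u m"
proof -
  define c :: real where "c = exp (-1/2)"
  have c: "0 \<le> c" "c < 1"
    by (auto simp: c_def)
  have exp_eq: "exp (- real k) = c ^ (2 * k)" for k
    by (simp add: c_def exp_of_nat_mult[symmetric])
  have close_on_window: "cmod (a (n + j) - b n (int (n + j))) \<le> u n" if "j \<le> p" for n j
    using member_le_sum[of j "{..p}" "\<lambda>k. cmod (a (n + k) - b n (int (n + k)))"] that close[of n]
    by (simp add: dm_tilde_def)
  have drift: "cmod (a (m + k) - b m (int (m + k))) \<le> (\<Sum>i\<le>k. 2 * u (m + i))" for k
    using window_approximants_drift_le[where b = b, OF p iso_torus_periodic[OF b] close_on_window]
    by (simp add: sum_distrib_left)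
  have summable_u: "summable (\<lambda>i. c ^ i * u (m + i))"
    using summable_geom_tail[OF c u] .
  have "dm m a (b m) = (\<Sum>k. c ^ (2 * k) * cmod (a (m + k) - b m (int (m + k))))"
    by (simp add: dm_def exp_eq)
  also have "\<dots> \<le> (\<Sum>i. c ^ i * (2 * u (m + i))) / (1 - c)"
    using summable_dm[OF b, of m] summable_mult[OF summable_u, of 2] u drift c
    by (intro geometric_weighted_partial_sums_le) (auto simp: exp_eq algebra_simps)
  also have "\<dots> = 2 / (1 - c) * geom_tail c u m"
    using suminf_mult[OF summable_u, of 2] by (simp add: geom_tail_def algebra_simps)
  finally show ?thesis
    unfolding c_def .
qed

lemma dist_torus_le_geom_tail:
  assumes p: "0 < p"
  shows "dist_torus p al0 m a
    \<le> 2 / (1 - exp (-1/2)) * geom_tail (exp (-1/2)) (\<lambda>n. dist_torus_tilde p al0 n a) m"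
proof -
  define c :: real where "c = exp (-1/2)"
  define t where "t n = dist_torus_tilde p al0 n a" for n
  have c: "0 \<le> c" "c < 1"
    by (auto simp: c_def)
  have t: "0 \<le> t n" "t n \<le> 2 * (real p + 1)" for n
    using dist_torus_tilde_nonneg dist_torus_tilde_le by (auto simp: t_def)
  have "dist_torus p al0 m a \<le> 2 / (1 - c) * geom_tail c t m + e" if "0 < e" for e
  proof -
    define eps where "eps = e * (1 - c)\<^sup>2 / 2"
    have "0 < eps"
      using c \<open>0 < e\<close> by (simp add: eps_def)
    then obtain b where b: "\<And>n. b n \<in> iso_torus p al0" "\<And>n. dm_tilde p n a (b n) \<le> t n + eps"
      using dist_torus_tilde_near_minimiser unfolding t_def by (metis less_imp_le)
    have "dist_torus p al0 m a \<le> dm m a (b m)"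
      unfolding dist_torus_def by (intro cINF_lower bdd_below_dm b)
    also have "\<dots> \<le> 2 / (1 - c) * geom_tail c (\<lambda>n. t n + eps) m"
      using dm_approximant_le_geom_tail[where b = b and u = "\<lambda>n. t n + eps" and B = "2 * (real p + 1) + eps",
          OF p b(1)] t \<open>0 < eps\<close> b(2)
      by (simp add: c_def)
    also have "\<dots> = 2 / (1 - c) * (geom_tail c t m + eps / (1 - c))"
      using geom_tail_add_const[where t = t, OF c t] by simp
    also have "\<dots> = 2 / (1 - c) * geom_tail c t m + e"
      using c by (simp add: eps_def power2_eq_square divide_simps) (simp add: algebra_simps)
    finally show ?thesis .
  qed
  then show ?thesis
    unfolding c_def t_def by (rule field_le_epsilon)
qed

lemma lq_norm_dist_torus_tilde_le:
  assumes "1 \<le> q"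
  shows "ennreal (exp (- real p)) * lq_norm q (\<lambda>m. dist_torus_tilde p al0 m a)
    \<le> lq_norm q (\<lambda>m. dist_torus p al0 m a)"
proof -
  have "lq_norm q (\<lambda>m. dist_torus_tilde p al0 m a) \<le> ennreal (exp (real p)) * lq_norm q (\<lambda>m. dist_torus p al0 m a)"
    using exp_dist_torus_tilde_le_dist_torus dist_torus_tilde_nonneg dist_torus_nonneg assms
    by (intro lq_norm_le_scaled) (auto simp: exp_minus field_simps)
  then have "ennreal (exp (- real p)) * lq_norm q (\<lambda>m. dist_torus_tilde p al0 m a)
      \<le> ennreal (exp (- real p)) * ennreal (exp (real p)) * lq_norm q (\<lambda>m. dist_torus p al0 m a)"
    by (simp add: mult.assoc mult_left_mono)
  then show ?thesis
    by (simp add: ennreal_mult[symmetric] exp_minus)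
qed

lemma lq_norm_dist_torus_le:
  assumes p: "0 < p" and q: "1 \<le> q"
  shows "lq_norm q (\<lambda>m. dist_torus p al0 m a)
    \<le> ennreal (2 / (1 - exp (-1/2))\<^sup>2) * lq_norm q (\<lambda>m. dist_torus_tilde p al0 m a)"
proof -
  define c :: real where "c = exp (-1/2)"
  define S where "S = 1 / (1 - c)"
  define t where "t n = dist_torus_tilde p al0 n a" for n
  have c: "0 \<le> c" "c < 1"
    by (auto simp: c_def)
  then have "0 < S"
    by (simp add: S_def)
  have t: "0 \<le> t n" "t n \<le> 2 * (real p + 1)" for n
    using dist_torus_tilde_nonneg dist_torus_tilde_le by (auto simp: t_def)
  have "dist_torus p al0 m a \<le> 2 * S * geom_tail c t m" for m
    using dist_torus_le_geom_tail[OF p] by (simp add: t_def[abs_def] c_def S_def)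
  then have "lq_norm q (\<lambda>m. dist_torus p al0 m a) \<le> ennreal (2 * S) * lq_norm q (geom_tail c t)"
    using dist_torus_nonneg geom_tail_nonneg[where t = t, OF c t] \<open>0 < S\<close> q
    by (intro lq_norm_le_scaled) auto
  also have "\<dots> \<le> ennreal (2 * S) * (ennreal S * lq_norm q t)"
    using lq_norm_geom_tail_le[where t = t, OF c t q] by (intro mult_left_mono) (auto simp: S_def)
  also have "\<dots> = ennreal (2 / (1 - c)\<^sup>2) * lq_norm q t"
    using \<open>0 < S\<close> by (simp add: ennreal_mult[symmetric] mult.assoc[symmetric] S_def power2_eq_square)
  finally show ?thesis
    by (simp add: c_def t_def[abs_def])
qed

end

theorem proposition4p6:
  fixes p :: nat and al0 :: "int \<Rightarrow> complex" and q :: ereal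
  assumes "even p" and "p > 0"
    and "periodic_verblunsky p al0"
    and "1 \<le> q"
  shows "\<exists>C::real. \<forall>a :: nat \<Rightarrow> complex. (\<forall>n. cmod (a n) < 1) \<longrightarrow>
     ennreal (exp (- real p)) * lq_norm q (\<lambda>m. dist_torus_tilde p al0 m a)
        \<le> lq_norm q (\<lambda>m. dist_torus p al0 m a)
     \<and> lq_norm q (\<lambda>m. dist_torus p al0 m a)
        \<le> ennreal C * lq_norm q (\<lambda>m. dist_torus_tilde p al0 m a)"
proof (rule exI[of _ "2 / (1 - exp (-1/2))\<^sup>2"], intro allI impI conjI)
  fix a :: "nat \<Rightarrow> complex"
  assume "\<forall>n. cmod (a n) < 1"
  then have a: "\<And>n. cmod (a n) < 1" by blast
  show "ennreal (exp (- real p)) * lq_norm q (\<lambda>m. dist_torus_tilde p al0 m a)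
      \<le> lq_norm q (\<lambda>m. dist_torus p al0 m a)"
    using lq_norm_dist_torus_tilde_le[where a = a, OF assms(3) a assms(4)] .
  show "lq_norm q (\<lambda>m. dist_torus p al0 m a)
      \<le> ennreal (2 / (1 - exp (-1/2))\<^sup>2) * lq_norm q (\<lambda>m. dist_torus_tilde p al0 m a)"
    using lq_norm_dist_torus_le[where a = a, OF assms(3) a assms(2) assms(4)] .
qed

end
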